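(* A set $\mathcal{K}\subseteq\wp(\mathcal{G})$ is coherent if and only if there is a non-empty set $\mathfrak{D}$ whose members are non-empty sets of coherent sets of desirable gambles, such that $\mathfrak{D}$ is downwards closed (for all $\mathbb{D}_1,\mathbb{D}_2\in\mathfrak{D}$ there is $\mathbb{D}\in\mathfrak{D}$ with $\mathbb{D}\subseteq\mathbb{D}_1\cap\mathbb{D}_2$), and for all $B\subseteq\mathcal{G}$: $B\in\mathcal{K}$ iff there is some $\mathbb{D}\in\mathfrak{D}$ such that for every $D\in\mathbb{D}$, $B\cap D\neq\emptyset$.
   Context: $\Omega$ is a non-empty set and $\mathcal{G}$ is the set of bounded functions $\Omega\to\mathbb{R}$. $f\geq g$ means pointwise $\geq$; $f\gneq g$ means $f\geq g$ and $f\neq g$; $\mathcal{G}_{\gneq 0}=\{f: f\gneq 0\}$. $\mathrm{posi}(B)=\{\sum_{i=1}^m\lambda_i h_i: m\geq1,\lambda_i>0,h_i\in B\}$. A set $D\subseteq\mathcal{G}$ is coherent if $0\notin D$; $\mathcal{G}_{\gneq0}\subseteq D$; $\lambda g\in D$ whenever $g\in D,\lambda>0$; and $f+g\in D$ whenever $f,g\in D$. A set $\mathcal{K}\subseteq\wp(\mathcal{G})$ is coherent if: (K$_\emptyset$) $\emptyset\notin\mathcal{K}$; (K$_0$) if $A\in\mathcal{K}$ then $A\setminus\{0\}\in\mathcal{K}$; (K$_{\gneq0}$) if $g\in\mathcal{G}_{\gneq0}$ then $\{g\}\in\mathcal{K}$; (K$_\supseteq$) if $A\in\mathcal{K}$ and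 $B\supseteq A$ then $B\in\mathcal{K}$; (K$_{\mathrm{Dom}}$) if $A\in\mathcal{K}$ and for each $g\in A$, $f_g$ is a gamble with $f_g\geq g$, then $\{f_g: g\in A\}\in\mathcal{K}$; (K$_{\mathrm{Add}}$) if $A_1,\ldots,A_n\in\mathcal{K}$ (finitely many) and for each $\langle g_1,\ldots,g_n\rangle\in A_1\times\cdots\times A_n$, $f_{\langle g_1,\ldots,g_n\rangle}$ is some member of $\mathrm{posi}(\{g_1,\ldots,g_n\})$, then $\{f_{\langle g_1,\ldots,g_n\rangle}:\langle g_1,\ldots,g_n\rangle\in A_1\times\cdots\times A_n\}\in\mathcal{K}$. *)

theory Defs
  imports Complex_Main
begin

type_synonym 'o gamble = "'o \<Rightarrow> real"

definition gambles :: "'o gamble set" where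
  "gambles = {f. \<exists>c. \<forall>w. \<bar>f w\<bar> \<le> c}"

definition gneq :: "'o gamble \<Rightarrow> 'o gamble \<Rightarrow> bool" where
  "gneq f g \<longleftrightarrow> (\<forall>w. f w \<ge> g w) \<and> f \<noteq> g"

definition pos_gambles :: "'o gamble set" where
  "pos_gambles = {f \<in> gambles. gneq f (\<lambda>_. 0)}"

definition posi :: "'o gamble set \<Rightarrow> 'o gamble set" where
  "posi B = {f. \<exists>m::nat. \<exists>c h. m \<ge> 1 \<and> (\<forall>i<m. c i > (0::real) \<and> h i \<in> B)
                \<and> f = (\<lambda>w. \<Sum>i<m. c i * h i w)}"

definition coherent_D :: "'o gamble set \<Rightarrow> bool" where
  "coherent_D D \<longleftrightarrow> D \<subseteq> gambles \<and> (\<lambda>_. 0) \<notin> D \<and> pos_gambles \<subseteq> D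
     \<and> (\<forall>g\<in>D. \<forall>l::real. l > 0 \<longrightarrow> (\<lambda>w. l * g w) \<in> D)
     \<and> (\<forall>f\<in>D. \<forall>g\<in>D. (\<lambda>w. f w + g w) \<in> D)"

definition coherent_K :: "'o gamble set set \<Rightarrow> bool" where
  "coherent_K K \<longleftrightarrow> K \<subseteq> Pow gambles
     \<and> {} \<notin> K
     \<and> (\<forall>A\<in>K. A - {\<lambda>_. 0} \<in> K)
     \<and> (\<forall>g\<in>pos_gambles. {g} \<in> K)
     \<and> (\<forall>A\<in>K. \<forall>B. A \<subseteq> B \<and> B \<subseteq> gambles \<longrightarrow> B \<in> K)
     \<and> (\<forall>A\<in>K. \<forall>F. (\<forall>g\<in>A. F g \<in> gambles \<and> (\<forall>w. F g w \<ge> g w)) \<longrightarrow> F ` A \<in> K)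
     \<and> (\<forall>As F. As \<noteq> [] \<and> set As \<subseteq> K
           \<and> (\<forall>gs\<in>listset As. F gs \<in> posi (set gs))
           \<longrightarrow> F ` listset As \<in> K)"

end

theory Submission
  imports Defs
begin

text \<open>
  For a coherent \<open>K\<close>, the representing family consists of the sets of coherent \<open>D\<close>
  meeting every member of a nonempty list \<open>As\<close> of elements of \<open>K\<close>; concatenating
  lists shows that this family is directed.
  The crux is that \<open>B \<in> K\<close> whenever \<open>B\<close> meets every such \<open>D\<close>. If \<open>B\<close> contains no
  positive gamble, then every selection \<open>gs\<close> from \<open>As\<close> has a positive combination
  dominated by \<open>0\<close> or by an element of \<open>B\<close>: otherwise the natural extension of \<open>gs\<close>
  would be a coherent \<open>D\<close> meeting each member of \<open>As\<close> but not \<open>B\<close>. Choosing such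
  combinations and their dominating elements, the rules K_Add, K_Dom, K_0 and K_\<open>\<supseteq>\<close>
  yield \<open>B \<in> K\<close>.

  Conversely, each coherence rule for a represented \<open>K\<close> follows from the matching
  closure property of the relation "\<open>B\<close> meets \<open>D\<close>" for a single coherent \<open>D\<close>;
  directedness provides a common member of the family for the finitely many premises
  of K_Add.
\<close>

lemma gambles_add:
  assumes "f \<in> gambles" "g \<in> gambles"
  shows "(\<lambda>w. f w + g w) \<in> gambles"
proof -
  from assms obtain c d where "\<forall>w. \<bar>f w\<bar> \<le> c" "\<forall>w. \<bar>g w\<bar> \<le> d" unfolding gambles_def by blast
  then have "\<forall>w. \<bar>f w + g w\<bar> \<le> c + d" by (metis abs_triangle_ineq add_mono order_trans)
  then show ?thesis unfolding gambles_def by blast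
qed

lemma gambles_diff:
  assumes "f \<in> gambles" "g \<in> gambles"
  shows "(\<lambda>w. f w - g w) \<in> gambles"
proof -
  from assms obtain c d where "\<forall>w. \<bar>f w\<bar> \<le> c" "\<forall>w. \<bar>g w\<bar> \<le> d" unfolding gambles_def by blast
  then have "\<forall>w. \<bar>f w - g w\<bar> \<le> c + d" by (metis abs_triangle_ineq4 add_mono order_trans)
  then show ?thesis unfolding gambles_def by blast
qed

lemma gambles_scale:
  assumes "g \<in> gambles" "(l::real) > 0"
  shows "(\<lambda>w. l * g w) \<in> gambles"
proof -
  from assms(1) obtain c where "\<forall>w. \<bar>g w\<bar> \<le> c" unfolding gambles_def by blast
  with assms(2) have "\<forall>w. \<bar>l * g w\<bar> \<le> l * c" by (simp add: abs_mult)
  then show ?thesis unfolding gambles_def by blast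
qed

lemma zero_in_gambles: "(\<lambda>_. 0) \<in> gambles"
  by (auto simp: gambles_def)

lemma pos_gambles_iff:
  "f \<in> pos_gambles \<longleftrightarrow> f \<in> gambles \<and> (\<forall>w. 0 \<le> f w) \<and> (\<exists>w. 0 < f w)"
  unfolding pos_gambles_def gneq_def fun_eq_iff by (auto simp: order.strict_iff_order)

lemma one_in_pos_gambles: "(\<lambda>_. 1) \<in> pos_gambles"
  by (auto simp: pos_gambles_iff gambles_def)

lemma pos_gambles_subset_gambles: "pos_gambles \<subseteq> gambles"
  by (auto simp: pos_gambles_def)

lemma pos_gambles_add:
  assumes "p \<in> pos_gambles" "q \<in> gambles" "\<forall>w. 0 \<le> q w"
  shows "(\<lambda>w. p w + q w) \<in> pos_gambles"
proof -
  obtain w where "0 < p w" using assms(1) by (auto simp: pos_gambles_iff)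
  then have "0 < p w + q w" using assms(3) by (simp add: add_pos_nonneg)
  with assms gambles_add show ?thesis by (auto simp: pos_gambles_iff)
qed

lemma pos_gambles_scale: "p \<in> pos_gambles \<Longrightarrow> (l::real) > 0 \<Longrightarrow> (\<lambda>w. l * p w) \<in> pos_gambles"
  by (auto simp: pos_gambles_iff gambles_scale) (use mult_pos_pos in blast)

lemma coherent_D_zero_notin: "coherent_D D \<Longrightarrow> (\<lambda>_. 0) \<notin> D"
  by (simp add: coherent_D_def)

lemma coherent_D_pos_gambles: "coherent_D D \<Longrightarrow> g \<in> pos_gambles \<Longrightarrow> g \<in> D"
  by (auto simp: coherent_D_def)

lemma coherent_D_upward_closed:
  assumes D: "coherent_D D" and "g \<in> D" "f \<in> gambles" "g \<le> f"
  shows "f \<in> D"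
proof (cases "f = g")
  case False
  have "D \<subseteq> gambles" "pos_gambles \<subseteq> D" and add: "\<forall>f\<in>D. \<forall>g\<in>D. (\<lambda>w. f w + g w) \<in> D"
    using D by (simp_all add: coherent_D_def)
  have "\<exists>w. 0 < f w - g w"
    using \<open>g \<le> f\<close> False by (auto simp: le_fun_def fun_eq_iff order.strict_iff_order)
  then have "(\<lambda>w. f w - g w) \<in> pos_gambles"
    using gambles_diff \<open>f \<in> gambles\<close> \<open>g \<in> D\<close> \<open>D \<subseteq> gambles\<close> \<open>g \<le> f\<close>
    by (auto simp: pos_gambles_iff le_fun_def)
  then have "(\<lambda>w. f w - g w) \<in> D" using \<open>pos_gambles \<subseteq> D\<close> by blast
  from add[rule_format, OF \<open>g \<in> D\<close> this] show ?thesis by simp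
qed (use \<open>g \<in> D\<close> in simp)

lemma posiE:
  assumes "f \<in> posi S"
  obtains m :: nat and c h where "m \<ge> 1" "\<forall>i<m. c i > (0::real) \<and> h i \<in> S"
    "f = (\<lambda>w. \<Sum>i<m. c i * h i w)"
  using assms unfolding posi_def by blast

lemma posi_least:
  assumes scale: "\<And>g l. g \<in> C \<Longrightarrow> (l::real) > 0 \<Longrightarrow> (\<lambda>w. l * g w) \<in> C"
    and add: "\<And>f g. f \<in> C \<Longrightarrow> g \<in> C \<Longrightarrow> (\<lambda>w. f w + g w) \<in> C"
    and "S \<subseteq> C"
  shows "posi S \<subseteq> C"
proof
  fix f assume "f \<in> posi S"
  then obtain m :: nat and c h where "m \<ge> 1" and ch: "\<forall>i<m. c i > (0::real) \<and> h i \<in> S"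
    and f: "f = (\<lambda>w. \<Sum>i<m. c i * h i w)" by (rule posiE)
  have "(\<lambda>w. \<Sum>i<Suc k. c i * h i w) \<in> C" if "Suc k \<le> m" for k
    using that
  proof (induction k)
    case 0
    then show ?case using ch \<open>S \<subseteq> C\<close> scale by auto
  next
    case (Suc k)
    then have "h (Suc k) \<in> C" "c (Suc k) > 0" using ch \<open>S \<subseteq> C\<close> by auto
    then have "(\<lambda>w. c (Suc k) * h (Suc k) w) \<in> C" by (rule scale)
    with Suc add[of "\<lambda>w. \<Sum>i<Suc k. c i * h i w"] show ?case by simp
  qed
  moreover obtain k where "m = Suc k" using \<open>m \<ge> 1\<close> by (cases m) auto
  ultimately show "f \<in> C" using f by simp
qed

lemma posi_subset_gambles: "S \<subseteq> gambles \<Longrightarrow> posi S \<subseteq> gambles"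
  by (rule posi_least) (simp_all add: gambles_scale gambles_add)

lemma posi_subset_coherent_D: "coherent_D D \<Longrightarrow> S \<subseteq> D \<Longrightarrow> posi S \<subseteq> D"
  by (rule posi_least) (auto simp: coherent_D_def)

lemma posi_superset: "S \<subseteq> posi S"
  unfolding posi_def by (auto intro!: exI[of _ 1] exI[of _ "\<lambda>_. 1"])

lemma posi_scale:
  assumes "f \<in> posi S" "(l::real) > 0"
  shows "(\<lambda>w. l * f w) \<in> posi S"
proof -
  obtain m :: nat and c h where "m \<ge> 1" "\<forall>i<m. c i > (0::real) \<and> h i \<in> S"
    and f: "f = (\<lambda>w. \<Sum>i<m. c i * h i w)" using assms(1) by (rule posiE)
  moreover have "(\<lambda>w. l * f w) = (\<lambda>w. \<Sum>i<m. (l * c i) * h i w)"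
    by (simp add: f sum_distrib_left mult.assoc)
  ultimately show ?thesis
    using \<open>l > 0\<close> unfolding posi_def by (intro CollectI exI[of _ m] exI[of _ "\<lambda>i. l * c i"]) auto
qed

lemma posi_add:
  assumes "f \<in> posi S" "g \<in> posi S"
  shows "(\<lambda>w. f w + g w) \<in> posi S"
proof -
  obtain m :: nat and c h where "m \<ge> 1" and ch: "\<forall>i<m. c i > (0::real) \<and> h i \<in> S"
    and f: "f = (\<lambda>w. \<Sum>i<m. c i * h i w)" using assms(1) by (rule posiE)
  obtain n :: nat and d k where "n \<ge> 1" and dk: "\<forall>i<n. d i > (0::real) \<and> k i \<in> S"
    and g: "g = (\<lambda>w. \<Sum>i<n. d i * k i w)" using assms(2) by (rule posiE)
  define c' where "c' i = (if i < m then c i else d (i - m))" for i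
  define h' where "h' i = (if i < m then h i else k (i - m))" for i
  have ch': "\<forall>i<m + n. c' i > 0 \<and> h' i \<in> S"
  proof (intro allI impI)
    fix i assume "i < m + n"
    show "c' i > 0 \<and> h' i \<in> S"
    proof (cases "i < m")
      case False
      with \<open>i < m + n\<close> have "i - m < n" by linarith
      with False dk show ?thesis by (simp add: c'_def h'_def)
    qed (use ch in \<open>simp add: c'_def h'_def\<close>)
  qed
  have "(\<Sum>i<m + n'. c' i * h' i w) = f w + (\<Sum>i<n'. d i * k i w)" for n' w
    by (induct n') (simp_all add: f c'_def h'_def)
  then have "(\<lambda>w. f w + g w) = (\<lambda>w. \<Sum>i<m + n. c' i * h' i w)"
    by (simp add: g)
  moreover have "m + n \<ge> 1" using \<open>m \<ge> 1\<close> by simp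
  ultimately show ?thesis
    using ch' unfolding posi_def by (intro CollectI exI[of _ "m + n"] exI[of _ c'] exI[of _ h'] conjI)
qed

definition dominates_posi :: "'o gamble set \<Rightarrow> 'o gamble \<Rightarrow> bool" where
  "dominates_posi S f \<longleftrightarrow> (\<exists>h\<in>posi S. h \<le> f)"

lemma dominates_posi_add:
  assumes "dominates_posi S f" and g: "dominates_posi S g \<or> (\<forall>w. 0 \<le> g w)"
  shows "dominates_posi S (\<lambda>w. f w + g w)"
proof -
  obtain h where h: "h \<in> posi S" "h \<le> f" using assms(1) by (auto simp: dominates_posi_def)
  show ?thesis
  proof (cases "dominates_posi S g")
    case True
    then obtain k where "k \<in> posi S" "k \<le> g" by (auto simp: dominates_posi_def)
    with h have "(\<lambda>w. h w + k w) \<in> posi S" "(\<lambda>w. h w + k w) \<le> (\<lambda>w. f w + g w)"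
      by (auto simp: posi_add le_fun_def add_mono)
    then show ?thesis by (auto simp: dominates_posi_def)
  next
    case False
    with g h have "h \<le> (\<lambda>w. f w + g w)" by (auto simp: le_fun_def add_increasing2)
    with h show ?thesis by (auto simp: dominates_posi_def)
  qed
qed

lemma dominates_posi_scale:
  assumes "dominates_posi S f" "(l::real) > 0"
  shows "dominates_posi S (\<lambda>w. l * f w)"
proof -
  obtain h where "h \<in> posi S" "h \<le> f" using assms(1) by (auto simp: dominates_posi_def)
  with assms(2) have "(\<lambda>w. l * h w) \<in> posi S" "(\<lambda>w. l * h w) \<le> (\<lambda>w. l * f w)"
    by (auto simp: posi_scale le_fun_def)
  then show ?thesis by (auto simp: dominates_posi_def)
qed

text \<open>This is \<open>posi (S \<union> pos_gambles)\<close>, written as an upward closure.\<close>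

definition natural_extension :: "'o gamble set \<Rightarrow> 'o gamble set" where
  "natural_extension S = {f \<in> gambles. dominates_posi S f} \<union> pos_gambles"

lemma natural_extension_superset:
  assumes "S \<subseteq> gambles"
  shows "S \<subseteq> natural_extension S"
proof
  fix g assume "g \<in> S"
  with assms posi_superset have "g \<in> gambles" "g \<in> posi S" by auto
  then show "g \<in> natural_extension S"
    unfolding natural_extension_def dominates_posi_def by (auto intro!: bexI[of _ g])
qed

lemma coherent_natural_extension:
  assumes "\<not> dominates_posi S (\<lambda>_. 0)"
  shows "coherent_D (natural_extension S)"
proof -
  let ?E = "natural_extension S"
  have E_cases: "f \<in> gambles \<and> (dominates_posi S f \<or> f \<in> pos_gambles \<and> (\<forall>w. 0 \<le> f w))"
    if "f \<in> ?E" for f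
    using that pos_gambles_subset_gambles by (auto simp: natural_extension_def pos_gambles_iff)
  have "(\<lambda>_. 0) \<notin> ?E"
    using assms by (auto simp: natural_extension_def pos_gambles_iff)
  moreover have "(\<lambda>w. l * g w) \<in> ?E" if "g \<in> ?E" "(l::real) > 0" for g l
    using E_cases[OF that(1)] that pos_gambles_scale gambles_scale dominates_posi_scale
    by (auto simp: natural_extension_def)
  moreover have "(\<lambda>w. f w + g w) \<in> ?E" if f: "f \<in> ?E" and g: "g \<in> ?E" for f g
  proof -
    have "(\<lambda>w. f w + g w) \<in> gambles" using E_cases[OF f] E_cases[OF g] gambles_add by blast
    consider "f \<in> pos_gambles" "g \<in> pos_gambles" | "dominates_posi S f" | "dominates_posi S g"
      using E_cases[OF f] E_cases[OF g] by blast
    then show ?thesis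
    proof cases
      case 1
      then show ?thesis using pos_gambles_add by (auto simp: pos_gambles_iff natural_extension_def)
    next
      case 2
      then have "dominates_posi S (\<lambda>w. f w + g w)" using dominates_posi_add E_cases[OF g] by blast
      with \<open>_ \<in> gambles\<close> show ?thesis by (simp add: natural_extension_def)
    next
      case 3
      then have "dominates_posi S (\<lambda>w. g w + f w)" using dominates_posi_add E_cases[OF f] by blast
      with \<open>_ \<in> gambles\<close> show ?thesis by (simp add: natural_extension_def add.commute)
    qed
  qed
  ultimately show ?thesis
    unfolding coherent_D_def using pos_gambles_subset_gambles by (auto simp: natural_extension_def)
qed

lemma listset_meets: "gs \<in> listset As \<Longrightarrow> A \<in> set As \<Longrightarrow> set gs \<inter> A \<noteq> {}"
  by (induct As arbitrary: gs) (auto simp: set_Cons_def)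

lemma listset_subset: "gs \<in> listset As \<Longrightarrow> set gs \<subseteq> \<Union>(set As)"
  by (induct As arbitrary: gs) (fastforce simp: set_Cons_def)+

lemma listset_pick: "\<forall>A\<in>set As. A \<inter> D \<noteq> {} \<Longrightarrow> \<exists>gs\<in>listset As. set gs \<subseteq> D"
proof (induction As)
  case (Cons A As)
  then obtain gs g where "gs \<in> listset As" "set gs \<subseteq> D" "g \<in> A \<inter> D" by auto
  then show ?case by (intro bexI[of _ "g # gs"]) (auto simp: set_Cons_def)
qed simp

lemma coherent_D_meets_dominating_image:
  assumes "coherent_D D" "A \<inter> D \<noteq> {}" "\<forall>g\<in>A. F g \<in> gambles \<and> g \<le> F g"
  shows "F ` A \<inter> D \<noteq> {}"
proof -
  obtain g where "g \<in> A" "g \<in> D" using assms(2) by blast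
  moreover have "F g \<in> gambles" "g \<le> F g" using assms(3) \<open>g \<in> A\<close> by auto
  ultimately have "F g \<in> D" using coherent_D_upward_closed[OF assms(1)] by blast
  with \<open>g \<in> A\<close> show ?thesis by blast
qed

lemma coherent_D_meets_posi_selection:
  assumes "coherent_D D" "\<forall>A\<in>set As. A \<inter> D \<noteq> {}" "\<forall>gs\<in>listset As. G gs \<in> posi (set gs)"
  shows "G ` listset As \<inter> D \<noteq> {}"
proof -
  obtain gs where "gs \<in> listset As" "set gs \<subseteq> D" using listset_pick[OF assms(2)] by blast
  then have "G gs \<in> D" using assms(3) posi_subset_coherent_D[OF assms(1)] by blast
  with \<open>gs \<in> listset As\<close> show ?thesis by blast
qed

lemma coherent_K_subset_gambles: "coherent_K K \<Longrightarrow> K \<subseteq> Pow gambles"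
  by (simp add: coherent_K_def)

lemma coherent_K_empty: "coherent_K K \<Longrightarrow> {} \<notin> K"
  by (simp add: coherent_K_def)

lemma coherent_K_remove_zero: "coherent_K K \<Longrightarrow> A \<in> K \<Longrightarrow> A - {\<lambda>_. 0} \<in> K"
  by (simp add: coherent_K_def)

lemma coherent_K_pos_gambles: "coherent_K K \<Longrightarrow> g \<in> pos_gambles \<Longrightarrow> {g} \<in> K"
  by (simp add: coherent_K_def)

lemma coherent_K_superset: "coherent_K K \<Longrightarrow> A \<in> K \<Longrightarrow> A \<subseteq> B \<Longrightarrow> B \<subseteq> gambles \<Longrightarrow> B \<in> K"
  unfolding coherent_K_def by blast

lemma coherent_K_dominating_image:
  "coherent_K K \<Longrightarrow> A \<in> K \<Longrightarrow> \<forall>g\<in>A. F g \<in> gambles \<and> g \<le> F g \<Longrightarrow> F ` A \<in> K"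
  unfolding coherent_K_def le_fun_def by blast

lemma coherent_K_posi_selection:
  "coherent_K K \<Longrightarrow> As \<noteq> [] \<Longrightarrow> set As \<subseteq> K
    \<Longrightarrow> \<forall>gs\<in>listset As. G gs \<in> posi (set gs) \<Longrightarrow> G ` listset As \<in> K"
  unfolding coherent_K_def by blast

definition coherent_sets_meeting :: "'o gamble set list \<Rightarrow> 'o gamble set set" where
  "coherent_sets_meeting As = {D. coherent_D D \<and> (\<forall>A\<in>set As. A \<inter> D \<noteq> {})}"

lemma posi_selection_dominated:
  assumes gs: "gs \<in> listset As" and "\<Union>(set As) \<subseteq> gambles" "B \<inter> pos_gambles = {}"
    and B_meets: "\<forall>D\<in>coherent_sets_meeting As. B \<inter> D \<noteq> {}"
  shows "\<exists>b\<in>insert (\<lambda>_. 0) B. dominates_posi (set gs) b"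
proof (rule ccontr)
  assume contra: "\<not> ?thesis"
  let ?E = "natural_extension (set gs)"
  have "set gs \<subseteq> gambles" using listset_subset[OF gs] assms(2) by blast
  have "coherent_D ?E" using contra by (intro coherent_natural_extension) simp
  moreover have "\<forall>A\<in>set As. A \<inter> ?E \<noteq> {}"
    using listset_meets[OF gs] natural_extension_superset[OF \<open>set gs \<subseteq> gambles\<close>] by blast
  ultimately obtain b where "b \<in> B" "b \<in> ?E" using B_meets by (auto simp: coherent_sets_meeting_def)
  with assms(3) have "dominates_posi (set gs) b" by (auto simp: natural_extension_def)
  with \<open>b \<in> B\<close> contra show False by blast
qed

lemma coherent_K_mem_if_entailed:
  assumes K: "coherent_K K" and As: "As \<noteq> []" "set As \<subseteq> K" and "B \<subseteq> gambles"
    and B_meets: "\<forall>D\<in>coherent_sets_meeting As. B \<inter> D \<noteq> {}"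
  shows "B \<in> K"
proof (cases "B \<inter> pos_gambles = {}")
  case False
  then obtain g where "g \<in> B" "g \<in> pos_gambles" by blast
  then have "{g} \<in> K" "{g} \<subseteq> B" using coherent_K_pos_gambles[OF K] by auto
  with \<open>B \<subseteq> gambles\<close> show ?thesis using coherent_K_superset[OF K] by blast
next
  case True
  have "\<Union>(set As) \<subseteq> gambles" using coherent_K_subset_gambles[OF K] As(2) by blast
  then have "\<forall>gs\<in>listset As. \<exists>b\<in>insert (\<lambda>_. 0) B. dominates_posi (set gs) b"
    using posi_selection_dominated True B_meets by blast
  then have "\<forall>gs\<in>listset As. \<exists>h. h \<in> posi (set gs) \<and> (\<exists>b\<in>insert (\<lambda>_. 0) B. h \<le> b)"
    unfolding dominates_posi_def by (metis (no_types))
  from bchoice[OF this] obtain F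
    where F: "\<forall>gs\<in>listset As. F gs \<in> posi (set gs) \<and> (\<exists>b\<in>insert (\<lambda>_. 0) B. F gs \<le> b)" ..
  then have "F ` listset As \<in> K" using coherent_K_posi_selection[OF K As] by blast
  from F have "\<forall>f\<in>F ` listset As. \<exists>b. b \<in> insert (\<lambda>_. 0) B \<and> f \<le> b" by auto
  from bchoice[OF this] obtain G where G: "\<forall>f\<in>F ` listset As. G f \<in> insert (\<lambda>_. 0) B \<and> f \<le> G f" ..
  then have "\<forall>f\<in>F ` listset As. G f \<in> gambles \<and> f \<le> G f"
    using \<open>B \<subseteq> gambles\<close> zero_in_gambles by auto
  with \<open>F ` listset As \<in> K\<close> have "G ` F ` listset As \<in> K" by (rule coherent_K_dominating_image[OF K])
  then have "G ` F ` listset As - {\<lambda>_. 0} \<in> K" by (rule coherent_K_remove_zero[OF K])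
  moreover have "G ` F ` listset As - {\<lambda>_. 0} \<subseteq> B" using G by blast
  ultimately show ?thesis using coherent_K_superset[OF K] \<open>B \<subseteq> gambles\<close> by blast
qed

lemma coherent_sets_meeting_nonempty:
  assumes K: "coherent_K K" and "As \<noteq> []" "set As \<subseteq> K"
  shows "coherent_sets_meeting As \<noteq> {}"
proof
  assume "coherent_sets_meeting As = {}"
  then have "{} \<in> K" using coherent_K_mem_if_entailed[OF K assms(2,3), of "{}"] by simp
  with coherent_K_empty[OF K] show False by contradiction
qed

lemma directed_lower_bound:
  fixes \<DD> :: "'a set set"
  assumes directed: "\<forall>\<D>1\<in>\<DD>. \<forall>\<D>2\<in>\<DD>. \<exists>\<D>\<in>\<DD>. \<D> \<subseteq> \<D>1 \<inter> \<D>2"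
    and "finite I" "I \<noteq> {}" "\<forall>i\<in>I. \<exists>\<D>\<in>\<DD>. \<D> \<subseteq> X i"
  shows "\<exists>\<D>\<in>\<DD>. \<forall>i\<in>I. \<D> \<subseteq> X i"
  using assms(2-)
proof (induction I rule: finite_ne_induct)
  case (insert i I)
  then obtain \<D>1 where "\<D>1 \<in> \<DD>" "\<D>1 \<subseteq> X i" by auto
  from insert obtain \<D>2 where "\<D>2 \<in> \<DD>" "\<forall>j\<in>I. \<D>2 \<subseteq> X j" by auto
  obtain \<D> where "\<D> \<in> \<DD>" "\<D> \<subseteq> \<D>1 \<inter> \<D>2"
    using directed \<open>\<D>1 \<in> \<DD>\<close> \<open>\<D>2 \<in> \<DD>\<close> by (elim ballE bexE) auto
  with \<open>\<D>1 \<subseteq> X i\<close> \<open>\<forall>j\<in>I. \<D>2 \<subseteq> X j\<close> have "\<forall>j\<in>insert i I. \<D> \<subseteq> X j"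
    by (metis Int_subset_iff insert_iff subset_trans)
  with \<open>\<D> \<in> \<DD>\<close> show ?case by blast
next
  case (singleton i)
  then show ?case by simp
qed

definition represents :: "'o gamble set set set \<Rightarrow> 'o gamble set set \<Rightarrow> bool" where
  "represents \<DD> K \<longleftrightarrow> \<DD> \<noteq> {}
     \<and> (\<forall>\<D>\<in>\<DD>. \<D> \<noteq> {} \<and> (\<forall>D\<in>\<D>. coherent_D D))
     \<and> (\<forall>\<D>1\<in>\<DD>. \<forall>\<D>2\<in>\<DD>. \<exists>\<D>\<in>\<DD>. \<D> \<subseteq> \<D>1 \<inter> \<D>2)
     \<and> (\<forall>B. B \<subseteq> gambles \<longrightarrow> (B \<in> K \<longleftrightarrow> (\<exists>\<D>\<in>\<DD>. \<forall>D\<in>\<D>. B \<inter> D \<noteq> {})))"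

lemma represents_nonempty: "represents \<DD> K \<Longrightarrow> \<DD> \<noteq> {}"
  by (simp add: represents_def)

lemma represents_members:
  "represents \<DD> K \<Longrightarrow> \<D> \<in> \<DD> \<Longrightarrow> \<D> \<noteq> {} \<and> (\<forall>D\<in>\<D>. coherent_D D)"
  by (simp add: represents_def)

lemma represents_directed:
  "represents \<DD> K \<Longrightarrow> \<forall>\<D>1\<in>\<DD>. \<forall>\<D>2\<in>\<DD>. \<exists>\<D>\<in>\<DD>. \<D> \<subseteq> \<D>1 \<inter> \<D>2"
  by (simp add: represents_def)

lemma represents_mem_iff:
  "represents \<DD> K \<Longrightarrow> B \<subseteq> gambles \<Longrightarrow> B \<in> K \<longleftrightarrow> (\<exists>\<D>\<in>\<DD>. \<forall>D\<in>\<D>. B \<inter> D \<noteq> {})"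
  by (simp add: represents_def)

lemma represents_if_coherent_K:
  assumes K: "coherent_K K"
  shows "represents (coherent_sets_meeting ` {As. As \<noteq> [] \<and> set As \<subseteq> K}) K"
    (is "represents ?\<DD> K")
proof -
  have "{\<lambda>_. 1} \<in> K" using coherent_K_pos_gambles[OF K one_in_pos_gambles] .
  then have "coherent_sets_meeting [{\<lambda>_. 1}] \<in> ?\<DD>" by simp
  then have "?\<DD> \<noteq> {}" by auto
  moreover have "\<forall>\<D>\<in>?\<DD>. \<D> \<noteq> {} \<and> (\<forall>D\<in>\<D>. coherent_D D)"
    using coherent_sets_meeting_nonempty[OF K] by (auto simp: coherent_sets_meeting_def)
  moreover have "\<forall>\<D>1\<in>?\<DD>. \<forall>\<D>2\<in>?\<DD>. \<exists>\<D>\<in>?\<DD>. \<D> \<subseteq> \<D>1 \<inter> \<D>2"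
  proof (intro ballI)
    fix \<D>1 \<D>2 assume "\<D>1 \<in> ?\<DD>" "\<D>2 \<in> ?\<DD>"
    then obtain As1 As2 where "As1 \<noteq> []" "set As1 \<subseteq> K" "\<D>1 = coherent_sets_meeting As1"
      and "set As2 \<subseteq> K" "\<D>2 = coherent_sets_meeting As2" by auto
    then have "coherent_sets_meeting (As1 @ As2) \<in> ?\<DD>" by simp
    moreover have "coherent_sets_meeting (As1 @ As2) \<subseteq> \<D>1 \<inter> \<D>2"
      using \<open>\<D>1 = _\<close> \<open>\<D>2 = _\<close> by (auto simp: coherent_sets_meeting_def)
    ultimately show "\<exists>\<D>\<in>?\<DD>. \<D> \<subseteq> \<D>1 \<inter> \<D>2" by (rule bexI[rotated])
  qed
  moreover have "\<forall>B. B \<subseteq> gambles \<longrightarrow> (B \<in> K \<longleftrightarrow> (\<exists>\<D>\<in>?\<DD>. \<forall>D\<in>\<D>. B \<inter> D \<noteq> {}))"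
  proof (intro allI impI iffI)
    fix B assume "B \<in> K"
    then have "coherent_sets_meeting [B] \<in> ?\<DD>" by simp
    moreover have "\<forall>D\<in>coherent_sets_meeting [B]. B \<inter> D \<noteq> {}" by (simp add: coherent_sets_meeting_def)
    ultimately show "\<exists>\<D>\<in>?\<DD>. \<forall>D\<in>\<D>. B \<inter> D \<noteq> {}" by (rule bexI[rotated])
  next
    fix B assume "B \<subseteq> gambles" "\<exists>\<D>\<in>?\<DD>. \<forall>D\<in>\<D>. B \<inter> D \<noteq> {}"
    then obtain As where "As \<noteq> []" "set As \<subseteq> K" "\<forall>D\<in>coherent_sets_meeting As. B \<inter> D \<noteq> {}"
      by auto
    then show "B \<in> K" using coherent_K_mem_if_entailed[OF K _ _ \<open>B \<subseteq> gambles\<close>] by simp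
  qed
  ultimately show ?thesis unfolding represents_def by (intro conjI)
qed

lemma represents_transfer:
  assumes K: "K \<subseteq> Pow gambles" and rep: "represents \<DD> K" and "A \<in> K" "B \<subseteq> gambles"
    and transfer: "\<And>D. coherent_D D \<Longrightarrow> A \<inter> D \<noteq> {} \<Longrightarrow> B \<inter> D \<noteq> {}"
  shows "B \<in> K"
proof -
  have "A \<subseteq> gambles" using K \<open>A \<in> K\<close> by auto
  with \<open>A \<in> K\<close> obtain \<D> where "\<D> \<in> \<DD>" and meets: "\<forall>D\<in>\<D>. A \<inter> D \<noteq> {}"
    using represents_mem_iff[OF rep] by auto
  have "\<forall>D\<in>\<D>. B \<inter> D \<noteq> {}"
  proof
    fix D assume "D \<in> \<D>"
    then show "B \<inter> D \<noteq> {}" using transfer meets represents_members[OF rep \<open>\<D> \<in> \<DD>\<close>] by auto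
  qed
  with \<open>\<D> \<in> \<DD>\<close> show ?thesis using represents_mem_iff[OF rep \<open>B \<subseteq> gambles\<close>] by auto
qed

lemma represents_posi_selection:
  assumes K: "K \<subseteq> Pow gambles" and rep: "represents \<DD> K"
    and "As \<noteq> []" "set As \<subseteq> K" and G: "\<forall>gs\<in>listset As. G gs \<in> posi (set gs)"
  shows "G ` listset As \<in> K"
proof -
  have "\<forall>A\<in>set As. \<exists>\<D>\<in>\<DD>. \<D> \<subseteq> {D. A \<inter> D \<noteq> {}}"
  proof
    fix A assume "A \<in> set As"
    with \<open>set As \<subseteq> K\<close> K have "A \<in> K" "A \<subseteq> gambles" by auto
    then obtain \<D> where "\<D> \<in> \<DD>" "\<forall>D\<in>\<D>. A \<inter> D \<noteq> {}" using represents_mem_iff[OF rep] by auto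
    then show "\<exists>\<D>\<in>\<DD>. \<D> \<subseteq> {D. A \<inter> D \<noteq> {}}" by auto
  qed
  then obtain \<D> where "\<D> \<in> \<DD>" and meets: "\<forall>A\<in>set As. \<D> \<subseteq> {D. A \<inter> D \<noteq> {}}"
    using directed_lower_bound[OF represents_directed[OF rep] finite_set, of As "\<lambda>A. {D. A \<inter> D \<noteq> {}}"]
      \<open>As \<noteq> []\<close> by auto
  have "G gs \<in> gambles" if "gs \<in> listset As" for gs
  proof -
    have "set gs \<subseteq> gambles" using listset_subset[OF that] \<open>set As \<subseteq> K\<close> K by auto
    then show ?thesis using posi_subset_gambles G that by auto
  qed
  then have "G ` listset As \<subseteq> gambles" by auto
  moreover have "\<forall>D\<in>\<D>. G ` listset As \<inter> D \<noteq> {}"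
  proof
    fix D assume "D \<in> \<D>"
    have "coherent_D D" using represents_members[OF rep \<open>\<D> \<in> \<DD>\<close>] \<open>D \<in> \<D>\<close> by auto
    moreover have "\<forall>A\<in>set As. A \<inter> D \<noteq> {}" using meets \<open>D \<in> \<D>\<close> by auto
    ultimately show "G ` listset As \<inter> D \<noteq> {}" using coherent_D_meets_posi_selection G by blast
  qed
  ultimately show ?thesis using represents_mem_iff[OF rep] \<open>\<D> \<in> \<DD>\<close> by blast
qed

lemma coherent_K_if_represents:
  fixes K :: "'o gamble set set"
  assumes K: "K \<subseteq> Pow gambles" and rep: "represents \<DD> K"
  shows "coherent_K K"
proof -
  note transfer = represents_transfer[OF K rep]
  have "{} \<notin> K"
    using represents_mem_iff[OF rep, of "{}"] represents_members[OF rep] by auto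
  moreover have "\<forall>A\<in>K. A - {\<lambda>_. 0} \<in> K"
  proof
    fix A assume "A \<in> K"
    then show "A - {\<lambda>_. 0} \<in> K"
      by (rule transfer) (use K \<open>A \<in> K\<close> coherent_D_zero_notin in auto)
  qed
  moreover have "\<forall>g\<in>pos_gambles. {g} \<in> K"
  proof
    fix g :: "'o gamble" assume "g \<in> pos_gambles"
    obtain \<D> where "\<D> \<in> \<DD>" using represents_nonempty[OF rep] by auto
    moreover have "\<forall>D\<in>\<D>. {g} \<inter> D \<noteq> {}"
      using represents_members[OF rep \<open>\<D> \<in> \<DD>\<close>] coherent_D_pos_gambles \<open>g \<in> pos_gambles\<close> by auto
    ultimately show "{g} \<in> K"
      using represents_mem_iff[OF rep, of "{g}"] \<open>g \<in> pos_gambles\<close> pos_gambles_subset_gambles by auto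
  qed
  moreover have "\<forall>A\<in>K. \<forall>B. A \<subseteq> B \<and> B \<subseteq> gambles \<longrightarrow> B \<in> K"
  proof (intro ballI allI impI)
    fix A B assume "A \<in> K" "A \<subseteq> B \<and> B \<subseteq> gambles"
    then show "B \<in> K" by (intro transfer[OF \<open>A \<in> K\<close>]) auto
  qed
  moreover have "\<forall>A\<in>K. \<forall>F. (\<forall>g\<in>A. F g \<in> gambles \<and> (\<forall>w. F g w \<ge> g w)) \<longrightarrow> F ` A \<in> K"
  proof (intro ballI allI impI)
    fix A F assume "A \<in> K" and "\<forall>g\<in>A. F g \<in> gambles \<and> (\<forall>w. F g w \<ge> g w)"
    then have F: "\<forall>g\<in>A. F g \<in> gambles \<and> g \<le> F g" by (simp add: le_fun_def)
    then have "F ` A \<subseteq> gambles" by auto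
    with \<open>A \<in> K\<close> show "F ` A \<in> K"
      by (rule transfer) (rule coherent_D_meets_dominating_image[OF _ _ F])
  qed
  moreover have "\<forall>As G. As \<noteq> [] \<and> set As \<subseteq> K \<and> (\<forall>gs\<in>listset As. G gs \<in> posi (set gs))
      \<longrightarrow> G ` listset As \<in> K"
    using represents_posi_selection[OF K rep] by auto
  ultimately show ?thesis using K unfolding coherent_K_def by (intro conjI)
qed

theorem mainTheorem10:
  fixes K :: "'o gamble set set"
  assumes "K \<subseteq> Pow gambles"
  shows "coherent_K K \<longleftrightarrow>
    (\<exists>\<DD> :: 'o gamble set set set.
       \<DD> \<noteq> {}
       \<and> (\<forall>\<D>\<in>\<DD>. \<D> \<noteq> {} \<and> (\<forall>D\<in>\<D>. coherent_D D))
       \<and> (\<forall>\<D>1\<in>\<DD>. \<forall>\<D>2\<in>\<DD>. \<exists>\<D>\<in>\<DD>. \<D> \<subseteq> \<D>1 \<inter> \<D>2)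
       \<and> (\<forall>B. B \<subseteq> gambles \<longrightarrow> (B \<in> K \<longleftrightarrow> (\<exists>\<D>\<in>\<DD>. \<forall>D\<in>\<D>. B \<inter> D \<noteq> {}))))"
proof -
  have "coherent_K K \<longleftrightarrow> (\<exists>\<DD>. represents \<DD> K)"
    using represents_if_coherent_K coherent_K_if_represents[OF assms] by blast
  then show ?thesis by (simp only: represents_def)
qed

end
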